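(* Let $\alpha_1,\alpha_2$ be real singular $1$-cocycles on $X$ both representing $a$, and let $\beta$ be a singular $0$-cochain on $X$ (viewed as a real-valued function on $X$) with $\alpha_1-\alpha_2=d\beta$. Let $g\in G_a$ be covered by $\widehat g\in\widehat G_a$. (1) Let $x\in X$ and assume $\widehat{\mathrm{rot}}_{x,\alpha_1}(\widehat g)$ and $\widehat{\mathrm{rot}}_{x,\alpha_2}(\widehat g)$ are defined. If $\beta$ is bounded on the orbit $\{g^i(x)\}_{i\in\mathbb{N}}$, then $\widehat{\mathrm{rot}}_{x,\alpha_1}(\widehat g)=\widehat{\mathrm{rot}}_{x,\alpha_2}(\widehat g)$. (2) Let $\mu$ be a $g$-invariant Borel probability measure on $X$ and assume $\widehat{\mathrm{rot}}_{\mu,\alpha_1}(\widehat g)$ and $\widehat{\mathrm{rot}}_{\mu,\alpha_2}(\widehat g)$ are defined. If $\int_X(\beta(g(x))-\beta(x))\,d\mu(x)=0$, then $\widehat{\mathrm{rot}}_{\mu,\alpha_1}(\widehat g)=\widehat{\mathrm{rot}}_{\mu,\alpha_2}(\widehat g)$.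
   Context: $A$ is $\mathbb{Z}$ or the discrete group $\mathbb{R}$. $X$ is a path-connected space, $a\in\mathrm{H}^1(X;A)$, $\pi\colon\widehat X_a\to X$ a principal $A$-bundle with holonomy $a$, $T_r$ the action of $r\in A$. $\widehat G_a$ is the group of bundle automorphisms of $\widehat X_a$ (homeomorphisms $\widehat g$ with $\pi\circ\widehat g=g\circ\pi$ for a homeomorphism $g$ of $X$, said to cover $g$), and $G_a$ the group of homeomorphisms of $X$ preserving $a$. For a real singular $1$-cocycle $\alpha$ representing $a$, let $\theta\colon\widehat X_a\to\mathbb{R}$ be a $0$-cochain with $d\theta=\pi^*\alpha$ and $\theta(T_r\widehat y)=\theta(\widehat y)+r$; for $x\in X$, $\rho_{x,\alpha}(\widehat g)=\theta(\widehat g(\widehat x))-\theta(\widehat x)$ with $\widehat x\in\pi^{-1}(x)$ (independent of choices); $\widehat{\mathrm{rot}}_{x,\alpha}(\widehat g)=\lim_{n\to\infty}\rho_{x,\alpha}(\widehat g^n)/n$ when it exists; for a $g$-invariant Borel probability measure $\mu$, $\widehat{\mathrm{rot}}_{\mu,\alpha}(\widehat g)=\int_X\rho_{x,\alpha}(\widehat g)\,d\mu(x)$ when it exists. *)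

theory Defs
  imports "HOL-Analysis.Analysis" "HOL-Homology.Homology" "HOL-Probability.Probability"
begin

definition vtx :: "nat \<Rightarrow> nat \<Rightarrow> real" where
  "vtx k = (\<lambda>i. if i = k then 1 else 0)"

text \<open>A real singular 1-cochain on X is a real-valued function on singular
  1-simplices ((nat => real) => 'a); a 0-cochain is a real-valued function on points.
  Coboundary of a 0-cochain b: (d b)(s) = b(s(e1)) - b(s(e0)) (face 0 is the endpoint e1).\<close>
definition cobdry0 :: "('a \<Rightarrow> real) \<Rightarrow> ((nat \<Rightarrow> real) \<Rightarrow> 'a) \<Rightarrow> real" where
  "cobdry0 b \<sigma> = b (\<sigma> (vtx 1)) - b (\<sigma> (vtx 0))"

definition cocycle1 :: "'a topology \<Rightarrow> (((nat \<Rightarrow> real) \<Rightarrow> 'a) \<Rightarrow> real) \<Rightarrow> bool" where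
  "cocycle1 X \<alpha> \<longleftrightarrow> (\<forall>\<tau>. singular_simplex 2 X \<tau> \<longrightarrow>
      \<alpha> (singular_face 2 0 \<tau>) - \<alpha> (singular_face 2 1 \<tau>) + \<alpha> (singular_face 2 2 \<tau>) = 0)"

definition principal_bundle ::
  "real set \<Rightarrow> 'a topology \<Rightarrow> 'b topology \<Rightarrow> ('b \<Rightarrow> 'a) \<Rightarrow> (real \<Rightarrow> 'b \<Rightarrow> 'b) \<Rightarrow> bool" where
  "principal_bundle A X Xh \<pi> T \<longleftrightarrow>
     continuous_map Xh X \<pi> \<and> \<pi> ` topspace Xh = topspace X \<and>
     (\<forall>r\<in>A. homeomorphic_map Xh Xh (T r)) \<and>
     (\<forall>y\<in>topspace Xh. T 0 y = y) \<and>
     (\<forall>r\<in>A. \<forall>s\<in>A. \<forall>y\<in>topspace Xh. T (r + s) y = T r (T s y)) \<and>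
     (\<forall>r\<in>A. \<forall>y\<in>topspace Xh. \<pi> (T r y) = \<pi> y) \<and>
     (\<forall>y\<in>topspace Xh. \<forall>y'\<in>topspace Xh. \<pi> y = \<pi> y' \<longrightarrow> (\<exists>!r. r \<in> A \<and> y' = T r y)) \<and>
     (\<forall>x\<in>topspace X. \<exists>U \<phi>. openin X U \<and> x \<in> U \<and>
        homeomorphic_map (subtopology Xh {y\<in>topspace Xh. \<pi> y \<in> U})
                         (prod_topology (subtopology X U) (discrete_topology A)) \<phi> \<and>
        (\<forall>y\<in>topspace Xh. \<pi> y \<in> U \<longrightarrow> fst (\<phi> y) = \<pi> y) \<and>
        (\<forall>r\<in>A. \<forall>y\<in>topspace Xh. \<pi> y \<in> U \<longrightarrow> snd (\<phi> (T r y)) = r + snd (\<phi> y)))"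

definition loop1 :: "'a topology \<Rightarrow> ((nat \<Rightarrow> real) \<Rightarrow> 'a) \<Rightarrow> bool" where
  "loop1 X \<sigma> \<longleftrightarrow> singular_simplex 1 X \<sigma> \<and> \<sigma> (vtx 0) = \<sigma> (vtx 1)"

definition holonomy_is ::
  "'b topology \<Rightarrow> ('b \<Rightarrow> 'a) \<Rightarrow> (real \<Rightarrow> 'b \<Rightarrow> 'b) \<Rightarrow> ((nat \<Rightarrow> real) \<Rightarrow> 'a) \<Rightarrow> real \<Rightarrow> bool" where
  "holonomy_is Xh \<pi> T \<sigma> r \<longleftrightarrow>
     (\<forall>\<sigma>h. singular_simplex 1 Xh \<sigma>h \<and> simplex_map 1 \<pi> \<sigma>h = \<sigma> \<longrightarrow> \<sigma>h (vtx 1) = T r (\<sigma>h (vtx 0)))"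

text \<open>The real 1-cocycle alpha represents the holonomy class a of the bundle
  (the class in H^1(X;A) = Hom(H_1 X, A), pushed to real coefficients):
  alpha is a cocycle whose value on every loop is the holonomy along that loop.\<close>
definition represents_holonomy ::
  "'a topology \<Rightarrow> 'b topology \<Rightarrow> ('b \<Rightarrow> 'a) \<Rightarrow> (real \<Rightarrow> 'b \<Rightarrow> 'b) \<Rightarrow>
   (((nat \<Rightarrow> real) \<Rightarrow> 'a) \<Rightarrow> real) \<Rightarrow> bool" where
  "represents_holonomy X Xh \<pi> T \<alpha> \<longleftrightarrow>
     cocycle1 X \<alpha> \<and> (\<forall>\<sigma>. loop1 X \<sigma> \<longrightarrow> holonomy_is Xh \<pi> T \<sigma> (\<alpha> \<sigma>))"

text \<open>g preserves the holonomy class a (g in G_a): homeomorphism with g^* a = a.\<close>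
definition preserves_holonomy ::
  "real set \<Rightarrow> 'a topology \<Rightarrow> 'b topology \<Rightarrow> ('b \<Rightarrow> 'a) \<Rightarrow> (real \<Rightarrow> 'b \<Rightarrow> 'b) \<Rightarrow> ('a \<Rightarrow> 'a) \<Rightarrow> bool" where
  "preserves_holonomy A X Xh \<pi> T g \<longleftrightarrow>
     homeomorphic_map X X g \<and>
     (\<forall>\<sigma> r. loop1 X \<sigma> \<and> r \<in> A \<longrightarrow>
        (holonomy_is Xh \<pi> T (simplex_map 1 g \<sigma>) r \<longleftrightarrow> holonomy_is Xh \<pi> T \<sigma> r))"

definition covers ::
  "'a topology \<Rightarrow> 'b topology \<Rightarrow> ('b \<Rightarrow> 'a) \<Rightarrow> ('b \<Rightarrow> 'b) \<Rightarrow> ('a \<Rightarrow> 'a) \<Rightarrow> bool" where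
  "covers X Xh \<pi> gh g \<longleftrightarrow> homeomorphic_map Xh Xh gh \<and> homeomorphic_map X X g \<and>
     (\<forall>y\<in>topspace Xh. \<pi> (gh y) = g (\<pi> y))"

definition potential ::
  "real set \<Rightarrow> 'b topology \<Rightarrow> ('b \<Rightarrow> 'a) \<Rightarrow> (real \<Rightarrow> 'b \<Rightarrow> 'b) \<Rightarrow>
   (((nat \<Rightarrow> real) \<Rightarrow> 'a) \<Rightarrow> real) \<Rightarrow> ('b \<Rightarrow> real) \<Rightarrow> bool" where
  "potential A Xh \<pi> T \<alpha> \<theta> \<longleftrightarrow>
     (\<forall>\<sigma>h. singular_simplex 1 Xh \<sigma>h \<longrightarrow> cobdry0 \<theta> \<sigma>h = \<alpha> (simplex_map 1 \<pi> \<sigma>h)) \<and>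
     (\<forall>r\<in>A. \<forall>y\<in>topspace Xh. \<theta> (T r y) = \<theta> y + r)"

definition rho ::
  "real set \<Rightarrow> 'b topology \<Rightarrow> ('b \<Rightarrow> 'a) \<Rightarrow> (real \<Rightarrow> 'b \<Rightarrow> 'b) \<Rightarrow>
   (((nat \<Rightarrow> real) \<Rightarrow> 'a) \<Rightarrow> real) \<Rightarrow> 'a \<Rightarrow> ('b \<Rightarrow> 'b) \<Rightarrow> real" where
  "rho A Xh \<pi> T \<alpha> x gh =
     (let \<theta> = (SOME \<theta>. potential A Xh \<pi> T \<alpha> \<theta>);
          xh = (SOME y. y \<in> topspace Xh \<and> \<pi> y = x)
      in \<theta> (gh xh) - \<theta> xh)"

text \<open>rot_{x,alpha}: value of the limit; it "is defined" when the sequence converges.\<close>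
definition rot_seq where
  "rot_seq A Xh \<pi> T \<alpha> x gh = (\<lambda>n::nat. rho A Xh \<pi> T \<alpha> x (gh ^^ n) / real n)"

definition rot_pt where
  "rot_pt A Xh \<pi> T \<alpha> x gh = lim (rot_seq A Xh \<pi> T \<alpha> x gh)"

text \<open>rot_{mu,alpha}: defined when the integrand is integrable.\<close>
definition rot_meas where
  "rot_meas A Xh \<pi> T \<alpha> M gh = integral\<^sup>L M (\<lambda>x. rho A Xh \<pi> T \<alpha> x gh)"

definition borel_of :: "'a topology \<Rightarrow> 'a set set" where
  "borel_of X = sigma_sets (topspace X) {U. openin X U}"

end

theory Submission
  imports Defs
begin

text \<open>For potentials \<theta>1, \<theta>2 of \<alpha>1, \<alpha>2, the function
  h = \<theta>1 - \<theta>2 - \<beta> \<circ> \<pi> on the total space has vanishing coboundary and is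
  invariant under the A-action. So it descends to X, where it is constant along every path:
  local sections of the bundle lift short subpaths, and [0,1] is connected. As X is
  path-connected, h is constant, and therefore the displacements of a lift gh of g differ by
  \<beta>(g x) - \<beta>(x). For the iterates of gh this is \<beta>(g^n x) - \<beta>(x), which is o(n)
  when \<beta> is bounded on the orbit; integrated against \<mu> it is the integral assumed to
  vanish.\<close>

lemma vtx_in_standard_simplex: "k \<le> 1 \<Longrightarrow> vtx k \<in> standard_simplex 1"
  unfolding standard_simplex_def vtx_def by (cases k) auto

lemma singular_simplex_of_pathin:
  assumes "pathin X c"
  shows "singular_simplex 1 X (restrict (\<lambda>v. c (v 1)) (standard_simplex 1))"
proof -
  have "v 1 \<in> {0..1}" if "v \<in> standard_simplex 1" for v :: "nat \<Rightarrow> real"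
  proof -
    have "0 \<le> v 0" "0 \<le> v 1" "v 0 + v 1 = 1"
      using that by (auto simp: standard_simplex_def numeral_2_eq_2)
    then show ?thesis by simp
  qed
  then have "continuous_map (subtopology (powertop_real UNIV) (standard_simplex 1))
               (top_of_set {0..1}) (\<lambda>v. v 1)"
    by (auto simp: continuous_map_in_subtopology
        intro: continuous_map_from_subtopology continuous_map_product_projection)
  then have "continuous_map (subtopology (powertop_real UNIV) (standard_simplex 1)) X (\<lambda>v. c (v 1))"
    using assms continuous_map_compose unfolding pathin_def o_def by fastforce
  then show ?thesis
    unfolding singular_simplex_def by (auto intro: continuous_map_eq)
qed

lemma pathin_ends_eq_if_cobdry0_eq_0:
  assumes "\<forall>\<sigma>. singular_simplex 1 X \<sigma> \<longrightarrow> cobdry0 h \<sigma> = 0" and "pathin X c"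
  shows "h (c 1) = h (c 0)"
proof -
  have "cobdry0 h (restrict (\<lambda>v. c (v 1)) (standard_simplex 1)) = 0"
    using assms singular_simplex_of_pathin by blast
  then show ?thesis
    using vtx_in_standard_simplex[of 0] vtx_in_standard_simplex[of 1]
    by (simp add: cobdry0_def vtx_def)
qed

lemma cobdry0_simplex_map:
  "cobdry0 \<beta> (simplex_map 1 f \<sigma>) = cobdry0 (\<beta> \<circ> f) \<sigma>"
  using vtx_in_standard_simplex[of 0] vtx_in_standard_simplex[of 1]
  by (simp add: cobdry0_def simplex_map_def)

lemma principal_bundle_fibre_eq:
  assumes "principal_bundle A X Xh \<pi> T"
    and "\<forall>r\<in>A. \<forall>y\<in>topspace Xh. h (T r y) = h y"
    and "y \<in> topspace Xh" "y' \<in> topspace Xh" "\<pi> y = \<pi> y'"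
  shows "h y = h y'"
proof -
  obtain r where "r \<in> A" "y' = T r y"
    using assms unfolding principal_bundle_def by blast
  then show ?thesis using assms by simp
qed

lemma principal_bundle_local_section:
  assumes pb: "principal_bundle A X Xh \<pi> T" and x: "x \<in> topspace X"
  obtains U sec where "openin X U" "x \<in> U" "continuous_map (subtopology X U) Xh sec"
    "\<forall>u\<in>U. \<pi> (sec u) = u"
proof -
  obtain U \<phi> where U: "openin X U" "x \<in> U"
    and hom: "homeomorphic_map (subtopology Xh {y\<in>topspace Xh. \<pi> y \<in> U})
                (prod_topology (subtopology X U) (discrete_topology A)) \<phi>"
    and fst_\<phi>: "\<forall>y\<in>topspace Xh. \<pi> y \<in> U \<longrightarrow> fst (\<phi> y) = \<pi> y"
  proof -
    have "\<forall>x\<in>topspace X. \<exists>U \<phi>. openin X U \<and> x \<in> U \<and>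
        homeomorphic_map (subtopology Xh {y\<in>topspace Xh. \<pi> y \<in> U})
                         (prod_topology (subtopology X U) (discrete_topology A)) \<phi> \<and>
        (\<forall>y\<in>topspace Xh. \<pi> y \<in> U \<longrightarrow> fst (\<phi> y) = \<pi> y)"
      using pb unfolding principal_bundle_def by blast
    then show ?thesis using x that by blast
  qed
  obtain \<psi> where \<psi>: "homeomorphic_maps (subtopology Xh {y\<in>topspace Xh. \<pi> y \<in> U})
                (prod_topology (subtopology X U) (discrete_topology A)) \<phi> \<psi>"
    using hom homeomorphic_map_maps by blast
  have U_sub: "U \<subseteq> topspace X"
    using U openin_subset by blast
  have "x \<in> \<pi> ` topspace Xh"
    using pb x unfolding principal_bundle_def by blast
  then obtain y0 where y0: "y0 \<in> topspace Xh" "\<pi> y0 = x"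
    by blast
  define r0 where "r0 = snd (\<phi> y0)"
  have "\<phi> y0 \<in> topspace (prod_topology (subtopology X U) (discrete_topology A))"
    using \<psi> y0 U(2) unfolding homeomorphic_maps_def continuous_map_def by auto
  then have r0: "r0 \<in> A"
    using U_sub by (auto simp: r0_def)
  have \<psi>_cont: "continuous_map (prod_topology (subtopology X U) (discrete_topology A))
      (subtopology Xh {y\<in>topspace Xh. \<pi> y \<in> U}) \<psi>"
    using \<psi> by (simp add: homeomorphic_maps_def)
  have pair_cont: "continuous_map (subtopology X U)
      (prod_topology (subtopology X U) (discrete_topology A)) (\<lambda>u. (u, r0))"
    using r0 by (intro continuous_map_pairedI) auto
  show ?thesis
  proof
    show "continuous_map (subtopology X U) Xh (\<lambda>u. \<psi> (u, r0))"
      using continuous_map_compose[OF pair_cont \<psi>_cont]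
      unfolding o_def continuous_map_in_subtopology by blast
    show "\<forall>u\<in>U. \<pi> (\<psi> (u, r0)) = u"
    proof
      fix u assume u: "u \<in> U"
      then have "\<psi> (u, r0) \<in> topspace Xh \<and> \<pi> (\<psi> (u, r0)) \<in> U" "\<phi> (\<psi> (u, r0)) = (u, r0)"
        using \<psi> r0 U_sub unfolding homeomorphic_maps_def continuous_map_def by auto
      then show "\<pi> (\<psi> (u, r0)) = u"
        using fst_\<phi> by (metis fst_conv)
    qed
  qed (use U in auto)
qed

lemma closed_cochain_locally_constant_along_path:
  assumes pb: "principal_bundle A X Xh \<pi> T"
    and closed: "\<forall>\<sigma>. singular_simplex 1 Xh \<sigma> \<longrightarrow> cobdry0 h \<sigma> = 0"
    and descends: "\<forall>y\<in>topspace Xh. h y = H (\<pi> y)"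
    and p: "pathin X p" and t: "t \<in> {0..1}"
  obtains W where "openin (top_of_set {0..1}) W" "t \<in> W" "\<forall>s\<in>W. H (p s) = H (p t)"
proof -
  have p_cont: "continuous_map (top_of_set {0..1}) X p"
    using p by (simp add: pathin_def)
  have "p t \<in> topspace X"
    using p_cont t by (auto simp: continuous_map_def)
  then obtain U sec where U: "openin X U" "p t \<in> U"
    and sec: "continuous_map (subtopology X U) Xh sec" and \<pi>_sec: "\<forall>u\<in>U. \<pi> (sec u) = u"
    by (rule principal_bundle_local_section[OF pb])
  have "openin (top_of_set {0..1}) {u \<in> {0..1}. p u \<in> U}"
    using openin_continuous_map_preimage[OF p_cont U(1)] by simp
  then obtain e where e: "e > 0" "ball t e \<inter> {0..1} \<subseteq> {u \<in> {0..1}. p u \<in> U}"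
    using t U(2) unfolding openin_contains_ball by blast
  define W where "W = ball t e \<inter> {0..1}"
  have H_sec: "h (sec u) = H u" if "u \<in> U" for u
  proof -
    have "u \<in> topspace (subtopology X U)"
      using that openin_subset[OF U(1)] by auto
    then have "sec u \<in> topspace Xh"
      using continuous_map_image_subset_topspace[OF sec] by blast
    then show ?thesis
      using descends \<pi>_sec that by simp
  qed
  show ?thesis
  proof
    show "openin (top_of_set {0..1}) W"
      using openin_open_Int[of "ball t e" "{0..1}"] by (simp add: W_def Int_commute)
    show "t \<in> W"
      using e t by (simp add: W_def)
    show "\<forall>s\<in>W. H (p s) = H (p t)"
    proof
      fix s assume s: "s \<in> W"
      have "closed_segment t s \<subseteq> W"
        using s \<open>t \<in> W\<close> convex_contains_segment[of W]
        by (simp add: W_def convex_Int)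
      then have "pathin (top_of_set W) (linepath t s)"
        using linepath_in_path by (force simp: pathin_subtopology)
      moreover have "continuous_map (top_of_set W) (subtopology X U) p"
        using e(2) continuous_map_from_subtopology_mono[OF p_cont]
        by (auto simp: W_def continuous_map_in_subtopology)
      ultimately have "pathin Xh (sec \<circ> p \<circ> linepath t s)"
        using sec by (auto intro: pathin_compose simp: comp_assoc)
      from pathin_ends_eq_if_cobdry0_eq_0[OF closed this]
      have "h (sec (p s)) = h (sec (p t))"
        by (simp add: linepath_0' linepath_1')
      then show "H (p s) = H (p t)"
        using H_sec e(2) s t U(2) by (auto simp: W_def)
    qed
  qed
qed

lemma closed_invariant_cochain_constant:
  assumes pb: "principal_bundle A X Xh \<pi> T" and X: "path_connected_space X"
    and closed: "\<forall>\<sigma>. singular_simplex 1 Xh \<sigma> \<longrightarrow> cobdry0 h \<sigma> = 0"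
    and invariant: "\<forall>r\<in>A. \<forall>y\<in>topspace Xh. h (T r y) = h y"
    and y: "y \<in> topspace Xh" "y' \<in> topspace Xh"
  shows "h y = h y'"
proof -
  define H where "H x = h (SOME y. y \<in> topspace Xh \<and> \<pi> y = x)" for x
  have descends: "\<forall>y\<in>topspace Xh. h y = H (\<pi> y)"
  proof
    fix y assume y: "y \<in> topspace Xh"
    let ?z = "SOME z. z \<in> topspace Xh \<and> \<pi> z = \<pi> y"
    have "?z \<in> topspace Xh \<and> \<pi> ?z = \<pi> y"
      by (rule someI[of _ y]) (use y in simp)
    then show "h y = H (\<pi> y)"
      unfolding H_def using principal_bundle_fibre_eq[OF pb invariant y] by simp
  qed
  have "\<pi> ` topspace Xh = topspace X"
    using pb unfolding principal_bundle_def by blast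
  then have "\<pi> y \<in> topspace X" "\<pi> y' \<in> topspace X"
    using y by auto
  then obtain p where p: "pathin X p" "p 0 = \<pi> y" "p 1 = \<pi> y'"
    using X unfolding path_connected_space_def by blast
  have "(H \<circ> p) constant_on {0..1}"
  proof (rule locally_constant_imp_constant)
    fix t :: real assume "t \<in> {0..1}"
    then obtain W where W: "openin (top_of_set {0..1}) W" "t \<in> W" "\<forall>s\<in>W. H (p s) = H (p t)"
      by (rule closed_cochain_locally_constant_along_path[OF pb closed descends p(1)])
    then show "\<exists>W. openin (top_of_set {0..1}) W \<and> t \<in> W \<and> (\<forall>s\<in>W. (H \<circ> p) s = (H \<circ> p) t)"
      unfolding comp_def by blast
  qed simp
  then have "H (p 0) = H (p 1)"
    unfolding constant_on_def by force
  then show ?thesis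
    using descends y p by simp
qed

lemma potential_diff_minus_pullback_constant:
  assumes pb: "principal_bundle A X Xh \<pi> T" and X: "path_connected_space X"
    and pot1: "potential A Xh \<pi> T \<alpha>1 \<theta>1" and pot2: "potential A Xh \<pi> T \<alpha>2 \<theta>2"
    and d\<beta>: "\<forall>\<sigma>. singular_simplex 1 X \<sigma> \<longrightarrow> \<alpha>1 \<sigma> - \<alpha>2 \<sigma> = cobdry0 \<beta> \<sigma>"
    and y: "y \<in> topspace Xh" "y' \<in> topspace Xh"
  shows "\<theta>1 y - \<theta>2 y - \<beta> (\<pi> y) = \<theta>1 y' - \<theta>2 y' - \<beta> (\<pi> y')"
proof (rule closed_invariant_cochain_constant[OF pb X _ _ y])
  have \<pi>_cont: "continuous_map Xh X \<pi>"
    using pb unfolding principal_bundle_def by blast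
  show "\<forall>\<sigma>. singular_simplex 1 Xh \<sigma> \<longrightarrow> cobdry0 (\<lambda>y. \<theta>1 y - \<theta>2 y - \<beta> (\<pi> y)) \<sigma> = 0"
  proof (intro allI impI)
    fix \<sigma> assume \<sigma>: "singular_simplex 1 Xh \<sigma>"
    have "cobdry0 \<theta>1 \<sigma> - cobdry0 \<theta>2 \<sigma> = cobdry0 \<beta> (simplex_map 1 \<pi> \<sigma>)"
      using pot1 pot2 d\<beta> \<sigma> singular_simplex_simplex_map[OF \<sigma> \<pi>_cont]
      unfolding potential_def by simp
    also have "\<dots> = cobdry0 (\<beta> \<circ> \<pi>) \<sigma>"
      by (rule cobdry0_simplex_map)
    finally show "cobdry0 (\<lambda>y. \<theta>1 y - \<theta>2 y - \<beta> (\<pi> y)) \<sigma> = 0"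
      by (simp add: cobdry0_simplex_map cobdry0_def)
  qed
  show "\<forall>r\<in>A. \<forall>y\<in>topspace Xh.
      \<theta>1 (T r y) - \<theta>2 (T r y) - \<beta> (\<pi> (T r y)) = \<theta>1 y - \<theta>2 y - \<beta> (\<pi> y)"
    using pot1 pot2 pb unfolding potential_def principal_bundle_def by simp
qed

lemma rho_diff_eq:
  assumes pb: "principal_bundle A X Xh \<pi> T" and X: "path_connected_space X"
    and pot1: "\<exists>\<theta>. potential A Xh \<pi> T \<alpha>1 \<theta>" and pot2: "\<exists>\<theta>. potential A Xh \<pi> T \<alpha>2 \<theta>"
    and d\<beta>: "\<forall>\<sigma>. singular_simplex 1 X \<sigma> \<longrightarrow> \<alpha>1 \<sigma> - \<alpha>2 \<sigma> = cobdry0 \<beta> \<sigma>"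
    and k: "\<forall>y\<in>topspace Xh. k y \<in> topspace Xh \<and> \<pi> (k y) = f (\<pi> y)"
    and x: "x \<in> topspace X"
  shows "rho A Xh \<pi> T \<alpha>1 x k - rho A Xh \<pi> T \<alpha>2 x k = \<beta> (f x) - \<beta> x"
proof -
  define xh where "xh = (SOME y. y \<in> topspace Xh \<and> \<pi> y = x)"
  have "x \<in> \<pi> ` topspace Xh"
    using pb x unfolding principal_bundle_def by blast
  then obtain y0 where "y0 \<in> topspace Xh" "\<pi> y0 = x"
    by blast
  then have xh: "xh \<in> topspace Xh \<and> \<pi> xh = x"
    unfolding xh_def by (rule someI[of _ y0, OF conjI])
  have "(SOME \<theta>. potential A Xh \<pi> T \<alpha>1 \<theta>) (k xh) - (SOME \<theta>. potential A Xh \<pi> T \<alpha>2 \<theta>) (k xh)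
      - \<beta> (\<pi> (k xh))
    = (SOME \<theta>. potential A Xh \<pi> T \<alpha>1 \<theta>) xh - (SOME \<theta>. potential A Xh \<pi> T \<alpha>2 \<theta>) xh - \<beta> (\<pi> xh)"
    using potential_diff_minus_pullback_constant[OF pb X someI_ex[OF pot1] someI_ex[OF pot2] d\<beta>]
      k xh by blast
  then show ?thesis
    using k xh unfolding rho_def Let_def xh_def[symmetric] by simp
qed

lemma covers_funpow:
  assumes "covers X Xh \<pi> gh g"
  shows "\<forall>y\<in>topspace Xh. (gh ^^ n) y \<in> topspace Xh \<and> \<pi> ((gh ^^ n) y) = (g ^^ n) (\<pi> y)"
proof -
  have "gh ` topspace Xh = topspace Xh" "\<forall>y\<in>topspace Xh. \<pi> (gh y) = g (\<pi> y)"
    using assms homeomorphic_imp_surjective_map unfolding covers_def by blast+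
  then show ?thesis
    by (induction n) auto
qed

lemma lim_eq_if_diff_bounded_over_n:
  fixes u v b :: "nat \<Rightarrow> real"
  assumes u: "convergent u" and v: "convergent v" and b: "bounded (range b)"
    and diff: "\<And>n. u n - v n = b n / real n"
  shows "lim u = lim v"
proof -
  obtain B where B: "\<And>n. \<bar>b n\<bar> \<le> B"
    using b unfolding bounded_iff by auto
  have "(\<lambda>n. u n - v n) \<longlonglongrightarrow> 0"
  proof (rule Lim_null_comparison)
    show "\<forall>\<^sub>F n in sequentially. norm (u n - v n) \<le> B * (1 / real n)"
      using B by (intro always_eventually) (simp add: diff abs_divide divide_right_mono)
    show "(\<lambda>n. B * (1 / real n)) \<longlonglongrightarrow> 0"
      using tendsto_mult_right_zero[OF lim_inverse_n'] by simp
  qed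
  moreover have "(\<lambda>n. u n - v n) \<longlonglongrightarrow> lim u - lim v"
    using u v by (intro tendsto_diff) (simp_all add: convergent_LIMSEQ_iff)
  ultimately show ?thesis
    using LIMSEQ_unique by fastforce
qed

theorem proposition2p11:
  fixes A :: "real set" and X :: "'a topology" and Xh :: "'b topology"
    and \<pi> :: "'b \<Rightarrow> 'a" and T :: "real \<Rightarrow> 'b \<Rightarrow> 'b"
    and \<alpha>1 \<alpha>2 :: "((nat \<Rightarrow> real) \<Rightarrow> 'a) \<Rightarrow> real" and \<beta> :: "'a \<Rightarrow> real"
    and g :: "'a \<Rightarrow> 'a" and gh :: "'b \<Rightarrow> 'b"
  assumes A: "A = range real_of_int \<or> A = UNIV"
    and X: "path_connected_space X"
    and pb: "principal_bundle A X Xh \<pi> T"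
    and rep1: "represents_holonomy X Xh \<pi> T \<alpha>1"
    and rep2: "represents_holonomy X Xh \<pi> T \<alpha>2"
    and pot1: "\<exists>\<theta>. potential A Xh \<pi> T \<alpha>1 \<theta>"
    and pot2: "\<exists>\<theta>. potential A Xh \<pi> T \<alpha>2 \<theta>"
    and dbeta: "\<forall>\<sigma>. singular_simplex 1 X \<sigma> \<longrightarrow> \<alpha>1 \<sigma> - \<alpha>2 \<sigma> = cobdry0 \<beta> \<sigma>"
    and gGa: "preserves_holonomy A X Xh \<pi> T g"
    and cov: "covers X Xh \<pi> gh g"
  shows "(\<forall>x\<in>topspace X.
            convergent (rot_seq A Xh \<pi> T \<alpha>1 x gh) \<and> convergent (rot_seq A Xh \<pi> T \<alpha>2 x gh) \<and>
            bounded (\<beta> ` range (\<lambda>i. (g ^^ i) x))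
            \<longrightarrow> rot_pt A Xh \<pi> T \<alpha>1 x gh = rot_pt A Xh \<pi> T \<alpha>2 x gh)
       \<and> (\<forall>M :: 'a measure.
            prob_space M \<and> space M = topspace X \<and> sets M = borel_of X \<and>
            g \<in> measurable M M \<and> (\<forall>B\<in>sets M. emeasure M (g -` B \<inter> space M) = emeasure M B) \<and>
            integrable M (\<lambda>x. rho A Xh \<pi> T \<alpha>1 x gh) \<and> integrable M (\<lambda>x. rho A Xh \<pi> T \<alpha>2 x gh) \<and>
            (\<integral>x. (\<beta> (g x) - \<beta> x) \<partial>M) = 0
            \<longrightarrow> rot_meas A Xh \<pi> T \<alpha>1 M gh = rot_meas A Xh \<pi> T \<alpha>2 M gh)"
proof -
  have rho_diff: "rho A Xh \<pi> T \<alpha>1 x (gh ^^ n) - rho A Xh \<pi> T \<alpha>2 x (gh ^^ n) = \<beta> ((g ^^ n) x) - \<beta> x"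
    if "x \<in> topspace X" for x n
    by (rule rho_diff_eq[OF pb X pot1 pot2 dbeta covers_funpow[OF cov] that])
  show ?thesis
  proof (intro conjI ballI allI impI; elim conjE)
    fix x assume x: "x \<in> topspace X"
      and conv1: "convergent (rot_seq A Xh \<pi> T \<alpha>1 x gh)"
      and conv2: "convergent (rot_seq A Xh \<pi> T \<alpha>2 x gh)"
      and bdd: "bounded (\<beta> ` range (\<lambda>i. (g ^^ i) x))"
    have "bounded (range (\<lambda>n. \<beta> ((g ^^ n) x) - \<beta> x))"
      using bounded_translation_minus[OF bdd] by (simp add: image_image)
    with conv1 conv2 show "rot_pt A Xh \<pi> T \<alpha>1 x gh = rot_pt A Xh \<pi> T \<alpha>2 x gh"
      unfolding rot_pt_def
      by (rule lim_eq_if_diff_bounded_over_n)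
        (simp add: rot_seq_def rho_diff[OF x] diff_divide_distrib[symmetric])
  next
    fix M :: "'a measure"
    assume "space M = topspace X"
      and int1: "integrable M (\<lambda>x. rho A Xh \<pi> T \<alpha>1 x gh)"
      and int2: "integrable M (\<lambda>x. rho A Xh \<pi> T \<alpha>2 x gh)"
      and "(\<integral>x. (\<beta> (g x) - \<beta> x) \<partial>M) = 0"
    have "rot_meas A Xh \<pi> T \<alpha>1 M gh - rot_meas A Xh \<pi> T \<alpha>2 M gh
        = (\<integral>x. rho A Xh \<pi> T \<alpha>1 x gh - rho A Xh \<pi> T \<alpha>2 x gh \<partial>M)"
      unfolding rot_meas_def using int1 int2 by (rule Bochner_Integration.integral_diff[symmetric])
    also have "\<dots> = (\<integral>x. \<beta> (g x) - \<beta> x \<partial>M)"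
      using rho_diff[of _ 1] \<open>space M = topspace X\<close> by (intro Bochner_Integration.integral_cong) auto
    finally show "rot_meas A Xh \<pi> T \<alpha>1 M gh = rot_meas A Xh \<pi> T \<alpha>2 M gh"
      using \<open>(\<integral>x. (\<beta> (g x) - \<beta> x) \<partial>M) = 0\<close> by simp
  qed
qed

end
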